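(* Assume $c_i=c>0$, $\gamma_i=\gamma>0$, $\nu_i=\nu>0$, $\rho_i=\rho\in(-1,1)$ for all $i$, and let $z^\star_{s,n},z^\star_{d,n},z^\star_{o,n}$ (the last for $n\ge2$) be the common values of the maximiser of $f$ as defined in the context, viewed as functions of $\gamma_{\rm P}\in(0,\infty)$. Then: (i) $\mathrm{sgn}(z^\star_{s,n})=-\mathrm{sgn}(\rho)$; (ii) for $n\ge2$, $z^\star_{o,n}>0$ for every $\gamma_{\rm P}>0$; and $z^\star_{d,n}>0$ for all $n\ge1$; (iii) $|z^\star_{s,n}|$ is non-increasing in $\gamma_{\rm P}$ (strictly decreasing if $\rho\ne0$) and $z^\star_{s,n}\to0$ as $\gamma_{\rm P}\to\infty$; (iv) for $n\ge2$, $\lim_{\gamma_{\rm P}\to\infty}z^\star_{o,n}=\frac{\gamma}{(n-1)A+\gamma}\in(0,1)$; (v) for all $n\ge1$, $\lim_{\gamma_{\rm P}\to\infty}z^\star_{d,n}=\frac{(n-1)A-(n-2)\gamma}{(n-1)A+\gamma}\in(0,1]$, where $A=\gamma+\frac{1}{c\nu^2}$.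
   Context: Fix an integer $n\ge1$ and parameters $\sigma>0$, $\gamma_{\rm P}>0$, and for each $i\in\{1,\dots,n\}$: $c_i>0$, $\gamma_i>0$, $\nu_i>0$, $\rho_i\in(-1,1)$. Write $\nu=(\nu_1,\dots,\nu_n)^\top$, $\rho=(\rho_1,\dots,\rho_n)^\top$. The variables are a matrix $z^Q=(z^{Q,i,j})_{i,j}\in\mathbb{R}^{n\times n}$ ($i$ row, $j$ column) and a vector $z^S=(z^{S,1},\dots,z^{S,n})^\top\in\mathbb{R}^n$. Define $f:\mathbb{R}^{n\times n}\times\mathbb{R}^n\to\mathbb{R}$ by $$f(z^Q,z^S)=-\frac1n\sum_{i=1}^n\Big(\frac{(z^{Q,i,i})^2}{2c_i}+\frac{\gamma_i}{2}\sum_{j=1}^n\nu_j^2(z^{Q,i,j})^2+\frac{\gamma_i\sigma^2}{2}(z^{S,i})^2+\frac{\gamma_i\sigma}{\sqrt n}z^{S,i}\sum_{j=1}^n\rho_j\nu_jz^{Q,i,j}-\frac{z^{Q,i,i}}{c_i}\Big)-\frac{\gamma_{\rm P}}{2n^2}\sum_{i=1}^n\Big(\Big(\nu_i-\nu_i\sum_{j=1}^nz^{Q,j,i}-\frac{\rho_i\sigma}{\sqrt n}\sum_{j=1}^nz^{S,j}\Big)^2+\frac{(1-\rho_i^2)\sigma^2}{n}\Big(\sum_{j=1}^nz^{S,j}\Big)^2\Big).$$ $f$ has a unique global maximiser $(z^{Q,\star},z^{S,\star})$. In the homogeneous case this maximiser is symmetric: $z^{S,i,\star}=z^\star_{s,n}$,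 $z^{Q,i,i,\star}=z^\star_{d,n}$ for all $i$, and $z^{Q,i,j,\star}=z^\star_{o,n}$ for all $i\ne j$ (when $n\ge2$). *)

theory Defs
  imports "HOL-Analysis.Analysis"
begin

text \<open>Indices 1..n of the paper are rendered as 0..n-1. The matrix z^Q is a function
  zQ :: nat => nat => real (row i, column j), the vector z^S is zS :: nat => real.\<close>

definition objf ::
  "nat \<Rightarrow> real \<Rightarrow> real \<Rightarrow> (nat \<Rightarrow> real) \<Rightarrow> (nat \<Rightarrow> real) \<Rightarrow> (nat \<Rightarrow> real) \<Rightarrow> (nat \<Rightarrow> real)
   \<Rightarrow> (nat \<Rightarrow> nat \<Rightarrow> real) \<Rightarrow> (nat \<Rightarrow> real) \<Rightarrow> real" where
  "objf n \<sigma> \<gamma>P c \<gamma> \<nu> \<rho> zQ zS =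
     - (1 / real n) * (\<Sum>i<n.
          (zQ i i)\<^sup>2 / (2 * c i)
        + \<gamma> i / 2 * (\<Sum>j<n. (\<nu> j)\<^sup>2 * (zQ i j)\<^sup>2)
        + \<gamma> i * \<sigma>\<^sup>2 / 2 * (zS i)\<^sup>2
        + \<gamma> i * \<sigma> / sqrt (real n) * zS i * (\<Sum>j<n. \<rho> j * \<nu> j * zQ i j)
        - zQ i i / c i)
     - \<gamma>P / (2 * (real n)\<^sup>2) * (\<Sum>i<n.
          (\<nu> i - \<nu> i * (\<Sum>j<n. zQ j i) - \<rho> i * \<sigma> / sqrt (real n) * (\<Sum>j<n. zS j))\<^sup>2
        + (1 - (\<rho> i)\<^sup>2) * \<sigma>\<^sup>2 / real n * (\<Sum>j<n. zS j)\<^sup>2)"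

text \<open>A point (zQ, zS) of R^{n x n} x R^n, represented extensionally (zero outside the index range).\<close>
definition admissible :: "nat \<Rightarrow> (nat \<Rightarrow> nat \<Rightarrow> real) \<Rightarrow> (nat \<Rightarrow> real) \<Rightarrow> bool" where
  "admissible n zQ zS \<longleftrightarrow>
     (\<forall>i j. \<not> (i < n \<and> j < n) \<longrightarrow> zQ i j = 0) \<and> (\<forall>i. n \<le> i \<longrightarrow> zS i = 0)"

definition maximiser ::
  "nat \<Rightarrow> real \<Rightarrow> real \<Rightarrow> (nat \<Rightarrow> real) \<Rightarrow> (nat \<Rightarrow> real) \<Rightarrow> (nat \<Rightarrow> real) \<Rightarrow> (nat \<Rightarrow> real)
   \<Rightarrow> (nat \<Rightarrow> nat \<Rightarrow> real) \<times> (nat \<Rightarrow> real)" where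
  "maximiser n \<sigma> \<gamma>P c \<gamma> \<nu> \<rho> =
     (THE p. admissible n (fst p) (snd p) \<and>
        (\<forall>zQ zS. admissible n zQ zS \<longrightarrow>
            objf n \<sigma> \<gamma>P c \<gamma> \<nu> \<rho> zQ zS \<le> objf n \<sigma> \<gamma>P c \<gamma> \<nu> \<rho> (fst p) (snd p)))"

text \<open>Homogeneous case: common values z*_{s,n}, z*_{d,n}, z*_{o,n} as functions of gamma_P
  (read off at indices 1, (1,1), (1,2) of the paper, i.e. 0, (0,0), (0,1) here).\<close>
definition zs_star :: "nat \<Rightarrow> real \<Rightarrow> real \<Rightarrow> real \<Rightarrow> real \<Rightarrow> real \<Rightarrow> real \<Rightarrow> real" where
  "zs_star n \<sigma> c \<gamma> \<nu> \<rho> \<gamma>P =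
     snd (maximiser n \<sigma> \<gamma>P (\<lambda>_. c) (\<lambda>_. \<gamma>) (\<lambda>_. \<nu>) (\<lambda>_. \<rho>)) 0"

definition zd_star :: "nat \<Rightarrow> real \<Rightarrow> real \<Rightarrow> real \<Rightarrow> real \<Rightarrow> real \<Rightarrow> real \<Rightarrow> real" where
  "zd_star n \<sigma> c \<gamma> \<nu> \<rho> \<gamma>P =
     fst (maximiser n \<sigma> \<gamma>P (\<lambda>_. c) (\<lambda>_. \<gamma>) (\<lambda>_. \<nu>) (\<lambda>_. \<rho>)) 0 0"

definition zo_star :: "nat \<Rightarrow> real \<Rightarrow> real \<Rightarrow> real \<Rightarrow> real \<Rightarrow> real \<Rightarrow> real \<Rightarrow> real" where
  "zo_star n \<sigma> c \<gamma> \<nu> \<rho> \<gamma>P =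
     fst (maximiser n \<sigma> \<gamma>P (\<lambda>_. c) (\<lambda>_. \<gamma>) (\<lambda>_. \<nu>) (\<lambda>_. \<rho>)) 0 1"

end

theory Submission
  imports Defs
begin

text \<open>
  For constant parameters, completing the square row by row writes \<open>f\<close> as a constant minus a
  nonnegative combination of squares of affine forms, and \<open>1 - \<rho>\<^sup>2 > 0\<close> makes the quadratic
  part positive definite: \<open>f (p + d) = f p + L\<^sub>p d - q d\<close> with \<open>q d > 0\<close> for \<open>d \<noteq> 0\<close>. So a
  stationary point is the unique maximiser. At a symmetric point \<open>L\<^sub>p\<close> only sees the trace and
  the total sum of \<open>dz\<^sup>Q\<close> and the sum of \<open>dz\<^sup>S\<close>, so stationarity reduces to three scalar
  equations. Their solution is
  \<open>z\<^sub>o = 1 - w\<close>, \<open>z\<^sub>d = 1 - \<gamma> w / A\<close>, \<open>z\<^sub>s = - \<rho> k w / (\<gamma> + \<gamma>\<^sub>P)\<close> with a constant \<open>k > 0\<close> and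
  \<open>w = A (n \<gamma> + (n - 1) \<gamma>\<^sub>P) / (n \<gamma> A + \<gamma> \<kappa> + ((n - 1) A + \<gamma>) \<gamma>\<^sub>P) \<in> (0, 1)\<close>,
  \<open>\<kappa> = \<rho>\<^sup>2 (A - \<gamma>) / (1 - \<rho>\<^sup>2)\<close>. Everything is read off these formulas: \<open>w / (\<gamma> + \<gamma>\<^sub>P)\<close> is
  strictly decreasing and \<open>w \<longrightarrow> (n - 1) A / ((n - 1) A + \<gamma>)\<close> as \<open>\<gamma>\<^sub>P \<rightarrow> \<infinity>\<close>.
\<close>

lemma admissible_eqI:
  assumes "admissible n Q S" "admissible n Q' S'"
    and "\<And>i j. i < n \<Longrightarrow> j < n \<Longrightarrow> Q' i j = Q i j" "\<And>i. i < n \<Longrightarrow> S' i = S i"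
  shows "Q' = Q" "S' = S"
  using assms unfolding admissible_def by (metis ext not_le)+

lemma maximiser_eqI:
  assumes "admissible n Q S"
    and "\<And>Q' S'. admissible n Q' S' \<Longrightarrow> objf n \<sigma> \<gamma>P c \<gamma> \<nu> \<rho> Q' S' \<le> objf n \<sigma> \<gamma>P c \<gamma> \<nu> \<rho> Q S"
    and "\<And>Q' S'. admissible n Q' S' \<Longrightarrow> objf n \<sigma> \<gamma>P c \<gamma> \<nu> \<rho> Q' S' = objf n \<sigma> \<gamma>P c \<gamma> \<nu> \<rho> Q S
           \<Longrightarrow> Q' = Q \<and> S' = S"
  shows "maximiser n \<sigma> \<gamma>P c \<gamma> \<nu> \<rho> = (Q, S)"
  unfolding maximiser_def
proof (rule the_equality)
  fix p assume "admissible n (fst p) (snd p) \<and> (\<forall>Q' S'. admissible n Q' S' \<longrightarrow>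
      objf n \<sigma> \<gamma>P c \<gamma> \<nu> \<rho> Q' S' \<le> objf n \<sigma> \<gamma>P c \<gamma> \<nu> \<rho> (fst p) (snd p))"
  with assms show "p = (Q, S)" by (metis order_antisym prod.collapse)
qed (use assms in auto)

definition row_cost ::
  "nat \<Rightarrow> real \<Rightarrow> real \<Rightarrow> real \<Rightarrow> real \<Rightarrow> real \<Rightarrow> (nat \<Rightarrow> nat \<Rightarrow> real) \<Rightarrow> (nat \<Rightarrow> real) \<Rightarrow> nat \<Rightarrow> real"
  where
  "row_cost n \<sigma> c \<gamma> \<nu> \<rho> Q S i =
     (Q i i)\<^sup>2 / (2 * c) + \<gamma> / 2 * (\<Sum>j<n. \<nu>\<^sup>2 * (Q i j)\<^sup>2) + \<gamma> * \<sigma>\<^sup>2 / 2 * (S i)\<^sup>2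
     + \<gamma> * \<sigma> / sqrt n * S i * (\<Sum>j<n. \<rho> * \<nu> * Q i j) - Q i i / c"

definition col_cost ::
  "nat \<Rightarrow> real \<Rightarrow> real \<Rightarrow> real \<Rightarrow> (nat \<Rightarrow> nat \<Rightarrow> real) \<Rightarrow> (nat \<Rightarrow> real) \<Rightarrow> nat \<Rightarrow> real" where
  "col_cost n \<sigma> \<nu> \<rho> Q S i =
     (\<nu> - \<nu> * (\<Sum>j<n. Q j i) - \<rho> * \<sigma> / sqrt n * (\<Sum>j<n. S j))\<^sup>2
     + (1 - \<rho>\<^sup>2) * \<sigma>\<^sup>2 / n * (\<Sum>j<n. S j)\<^sup>2"

lemma objf_homogeneous:
  "objf n \<sigma> \<gamma>P (\<lambda>_. c) (\<lambda>_. \<gamma>) (\<lambda>_. \<nu>) (\<lambda>_. \<rho>) Q S =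
     - (1 / n) * (\<Sum>i<n. row_cost n \<sigma> c \<gamma> \<nu> \<rho> Q S i)
     - \<gamma>P / (2 * (real n)\<^sup>2) * (\<Sum>i<n. col_cost n \<sigma> \<nu> \<rho> Q S i)"
  unfolding objf_def row_cost_def col_cost_def by (simp add: sum_distrib_left mult.assoc)

definition row_lin ::
  "nat \<Rightarrow> real \<Rightarrow> real \<Rightarrow> real \<Rightarrow> real \<Rightarrow> real \<Rightarrow> (nat \<Rightarrow> nat \<Rightarrow> real) \<Rightarrow> (nat \<Rightarrow> real)
    \<Rightarrow> (nat \<Rightarrow> nat \<Rightarrow> real) \<Rightarrow> (nat \<Rightarrow> real) \<Rightarrow> nat \<Rightarrow> real" where
  "row_lin n \<sigma> c \<gamma> \<nu> \<rho> Q S dQ dS i =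
     (Q i i - 1) * dQ i i / c + \<gamma> * (\<Sum>j<n. \<nu>\<^sup>2 * Q i j * dQ i j) + \<gamma> * \<sigma>\<^sup>2 * S i * dS i
     + \<gamma> * \<sigma> / sqrt n * (S i * (\<Sum>j<n. \<rho> * \<nu> * dQ i j) + dS i * (\<Sum>j<n. \<rho> * \<nu> * Q i j))"

definition row_quad ::
  "nat \<Rightarrow> real \<Rightarrow> real \<Rightarrow> real \<Rightarrow> real \<Rightarrow> real \<Rightarrow> (nat \<Rightarrow> nat \<Rightarrow> real) \<Rightarrow> (nat \<Rightarrow> real) \<Rightarrow> nat \<Rightarrow> real"
  where
  "row_quad n \<sigma> c \<gamma> \<nu> \<rho> dQ dS i =
     (dQ i i)\<^sup>2 / (2 * c)
     + \<gamma> / 2 * ((\<Sum>j<n. (\<nu> * dQ i j + \<rho> * \<sigma> / sqrt n * dS i)\<^sup>2) + (1 - \<rho>\<^sup>2) * \<sigma>\<^sup>2 * (dS i)\<^sup>2)"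

definition col_lin ::
  "nat \<Rightarrow> real \<Rightarrow> real \<Rightarrow> real \<Rightarrow> (nat \<Rightarrow> nat \<Rightarrow> real) \<Rightarrow> (nat \<Rightarrow> real)
    \<Rightarrow> (nat \<Rightarrow> nat \<Rightarrow> real) \<Rightarrow> (nat \<Rightarrow> real) \<Rightarrow> nat \<Rightarrow> real" where
  "col_lin n \<sigma> \<nu> \<rho> Q S dQ dS i =
     - 2 * (\<nu> - \<nu> * (\<Sum>j<n. Q j i) - \<rho> * \<sigma> / sqrt n * (\<Sum>j<n. S j))
         * (\<nu> * (\<Sum>j<n. dQ j i) + \<rho> * \<sigma> / sqrt n * (\<Sum>j<n. dS j))
     + 2 * (1 - \<rho>\<^sup>2) * \<sigma>\<^sup>2 / n * (\<Sum>j<n. S j) * (\<Sum>j<n. dS j)"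

definition col_quad ::
  "nat \<Rightarrow> real \<Rightarrow> real \<Rightarrow> real \<Rightarrow> (nat \<Rightarrow> nat \<Rightarrow> real) \<Rightarrow> (nat \<Rightarrow> real) \<Rightarrow> nat \<Rightarrow> real" where
  "col_quad n \<sigma> \<nu> \<rho> dQ dS i =
     (\<nu> * (\<Sum>j<n. dQ j i) + \<rho> * \<sigma> / sqrt n * (\<Sum>j<n. dS j))\<^sup>2
     + (1 - \<rho>\<^sup>2) * \<sigma>\<^sup>2 / n * (\<Sum>j<n. dS j)\<^sup>2"

lemma row_cost_add:
  assumes "0 < n"
  shows "row_cost n \<sigma> c \<gamma> \<nu> \<rho> (\<lambda>i j. Q i j + dQ i j) (\<lambda>i. S i + dS i) i =
     row_cost n \<sigma> c \<gamma> \<nu> \<rho> Q S i + row_lin n \<sigma> c \<gamma> \<nu> \<rho> Q S dQ dS i + row_quad n \<sigma> c \<gamma> \<nu> \<rho> dQ dS i"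
proof -
  define b where "b = \<rho> * \<sigma> / sqrt n * dS i"
  have "(\<Sum>j<n. (\<nu> * dQ i j + b)\<^sup>2) =
      (\<Sum>j<n. \<nu>\<^sup>2 * (dQ i j)\<^sup>2) + 2 * b * \<nu> * (\<Sum>j<n. dQ i j) + n * b\<^sup>2"
    by (simp add: power2_sum sum.distrib sum_distrib_left power_mult_distrib algebra_simps)
  moreover have "n * b\<^sup>2 = \<rho>\<^sup>2 * \<sigma>\<^sup>2 * (dS i)\<^sup>2"
    using assms by (simp add: b_def power_divide power_mult_distrib)
  ultimately show ?thesis
    unfolding row_cost_def row_lin_def row_quad_def b_def[symmetric]
    by (simp add: power2_sum algebra_simps sum.distrib sum_distrib_left add_divide_distrib
        diff_divide_distrib sum_divide_distrib b_def)
qed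

lemma col_cost_add:
  "col_cost n \<sigma> \<nu> \<rho> (\<lambda>i j. Q i j + dQ i j) (\<lambda>i. S i + dS i) i =
     col_cost n \<sigma> \<nu> \<rho> Q S i + col_lin n \<sigma> \<nu> \<rho> Q S dQ dS i + col_quad n \<sigma> \<nu> \<rho> dQ dS i"
  unfolding col_cost_def col_lin_def col_quad_def sum.distrib
  by (simp add: power2_eq_square algebra_simps add_divide_distrib diff_divide_distrib)

definition first_variation ::
  "nat \<Rightarrow> real \<Rightarrow> real \<Rightarrow> real \<Rightarrow> real \<Rightarrow> real \<Rightarrow> real \<Rightarrow> (nat \<Rightarrow> nat \<Rightarrow> real) \<Rightarrow> (nat \<Rightarrow> real)
    \<Rightarrow> (nat \<Rightarrow> nat \<Rightarrow> real) \<Rightarrow> (nat \<Rightarrow> real) \<Rightarrow> real" where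
  "first_variation n \<sigma> \<gamma>P c \<gamma> \<nu> \<rho> Q S dQ dS =
     - (1 / n) * (\<Sum>i<n. row_lin n \<sigma> c \<gamma> \<nu> \<rho> Q S dQ dS i)
     - \<gamma>P / (2 * (real n)\<^sup>2) * (\<Sum>i<n. col_lin n \<sigma> \<nu> \<rho> Q S dQ dS i)"

definition second_variation ::
  "nat \<Rightarrow> real \<Rightarrow> real \<Rightarrow> real \<Rightarrow> real \<Rightarrow> real \<Rightarrow> real
    \<Rightarrow> (nat \<Rightarrow> nat \<Rightarrow> real) \<Rightarrow> (nat \<Rightarrow> real) \<Rightarrow> real" where
  "second_variation n \<sigma> \<gamma>P c \<gamma> \<nu> \<rho> dQ dS =
     (1 / n) * (\<Sum>i<n. row_quad n \<sigma> c \<gamma> \<nu> \<rho> dQ dS i)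
     + \<gamma>P / (2 * (real n)\<^sup>2) * (\<Sum>i<n. col_quad n \<sigma> \<nu> \<rho> dQ dS i)"

lemma objf_add:
  assumes "0 < n"
  shows "objf n \<sigma> \<gamma>P (\<lambda>_. c) (\<lambda>_. \<gamma>) (\<lambda>_. \<nu>) (\<lambda>_. \<rho>) (\<lambda>i j. Q i j + dQ i j) (\<lambda>i. S i + dS i) =
     objf n \<sigma> \<gamma>P (\<lambda>_. c) (\<lambda>_. \<gamma>) (\<lambda>_. \<nu>) (\<lambda>_. \<rho>) Q S
     + first_variation n \<sigma> \<gamma>P c \<gamma> \<nu> \<rho> Q S dQ dS - second_variation n \<sigma> \<gamma>P c \<gamma> \<nu> \<rho> dQ dS"
  unfolding objf_homogeneous row_cost_add[OF assms] col_cost_add first_variation_def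
    second_variation_def sum.distrib
  by (simp add: algebra_simps)

definition sym_mat :: "nat \<Rightarrow> real \<Rightarrow> real \<Rightarrow> nat \<Rightarrow> nat \<Rightarrow> real" where
  "sym_mat n zd zo i j = (if i < n \<and> j < n then if i = j then zd else zo else 0)"

definition const_vec :: "nat \<Rightarrow> real \<Rightarrow> nat \<Rightarrow> real" where
  "const_vec n zs i = (if i < n then zs else 0)"

lemma admissible_sym: "admissible n (sym_mat n zd zo) (const_vec n zs)"
  unfolding admissible_def sym_mat_def const_vec_def by auto

lemma sum_sym_mat_row:
  "i < n \<Longrightarrow> (\<Sum>j<n. sym_mat n zd zo i j * f j) = zo * (\<Sum>j<n. f j) + (zd - zo) * f i"
proof -
  assume i: "i < n"
  have "(\<Sum>j<n. sym_mat n zd zo i j * f j) = (\<Sum>j<n. zo * f j + (if j = i then (zd - zo) * f i else 0))"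
    by (rule sum.cong) (auto simp: sym_mat_def i algebra_simps)
  then show ?thesis using i by (simp add: sum.distrib sum_distrib_left)
qed

lemma sum_sym_mat_col:
  "i < n \<Longrightarrow> (\<Sum>j<n. sym_mat n zd zo j i) = zd + (real n - 1) * zo"
proof -
  assume i: "i < n"
  have "(\<Sum>j<n. sym_mat n zd zo j i) = (\<Sum>j<n. sym_mat n zd zo i j * 1)"
    by (rule sum.cong) (auto simp: sym_mat_def)
  then show ?thesis using sum_sym_mat_row[OF i, of zd zo "\<lambda>_. 1"] by (simp add: algebra_simps)
qed

lemma row_lin_sym:
  assumes "i < n"
  shows "row_lin n \<sigma> c \<gamma> \<nu> \<rho> (sym_mat n zd zo) (const_vec n zs) dQ dS i =
      ((zd - 1) / c + \<gamma> * \<nu>\<^sup>2 * (zd - zo)) * dQ i i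
      + (\<gamma> * \<nu>\<^sup>2 * zo + \<gamma> * \<rho> * \<nu> * \<sigma> / sqrt n * zs) * (\<Sum>j<n. dQ i j)
      + (\<gamma> * \<sigma>\<^sup>2 * zs + \<gamma> * \<rho> * \<nu> * \<sigma> / sqrt n * (zd + (real n - 1) * zo)) * dS i"
proof -
  have quad: "(\<Sum>j<n. \<nu>\<^sup>2 * sym_mat n zd zo i j * dQ i j) =
      \<nu>\<^sup>2 * (zo * (\<Sum>j<n. dQ i j) + (zd - zo) * dQ i i)"
    using sum_sym_mat_row[OF assms, of zd zo "dQ i"] by (simp add: sum_distrib_left[symmetric] mult.assoc)
  have "(\<Sum>j<n. sym_mat n zd zo i j) = zd + (real n - 1) * zo"
    using sum_sym_mat_row[OF assms, of zd zo "\<lambda>_. 1"] by (simp add: algebra_simps)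
  then have cross: "(\<Sum>j<n. \<rho> * \<nu> * sym_mat n zd zo i j) = \<rho> * \<nu> * (zd + (real n - 1) * zo)"
    by (simp add: sum_distrib_left[symmetric])
  have lin: "(\<Sum>j<n. \<rho> * \<nu> * dQ i j) = \<rho> * \<nu> * (\<Sum>j<n. dQ i j)"
    by (simp add: sum_distrib_left)
  show ?thesis
    unfolding row_lin_def quad cross lin using assms
    by (simp add: sym_mat_def const_vec_def algebra_simps add_divide_distrib diff_divide_distrib)
qed

lemma col_lin_sym:
  fixes n :: nat and \<sigma> \<nu> \<rho> zd zo zs :: real
  assumes "0 < n" and "i < n"
  defines "e \<equiv> \<nu> * (1 - (zd + (real n - 1) * zo)) - \<rho> * \<sigma> * sqrt n * zs"
  shows "col_lin n \<sigma> \<nu> \<rho> (sym_mat n zd zo) (const_vec n zs) dQ dS i =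
      - 2 * e * \<nu> * (\<Sum>j<n. dQ j i)
      - 2 * (\<rho> * \<sigma> / sqrt n * e - (1 - \<rho>\<^sup>2) * \<sigma>\<^sup>2 * zs) * (\<Sum>j<n. dS j)"
proof -
  have sum_S: "(\<Sum>j<n. const_vec n zs j) = n * zs"
    by (simp add: const_vec_def)
  have sqrt_eq: "\<rho> * \<sigma> / sqrt n * (n * zs) = \<rho> * \<sigma> * sqrt n * zs"
    by (metis real_div_sqrt of_nat_0_le_iff times_divide_eq_right times_divide_eq_left mult.assoc mult.commute)
  have cancel_n: "2 * (1 - \<rho>\<^sup>2) * \<sigma>\<^sup>2 / n * (n * zs) = 2 * (1 - \<rho>\<^sup>2) * \<sigma>\<^sup>2 * zs"
    using assms(1) by simp
  show ?thesis
    unfolding col_lin_def sum_sym_mat_col[OF assms(2)] sum_S sqrt_eq cancel_n e_def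
    by (simp add: algebra_simps add_divide_distrib)
qed

lemma first_variation_sym:
  fixes n :: nat and \<sigma> \<gamma>P c \<gamma> \<nu> \<rho> zd zo zs :: real
  assumes "0 < n"
  defines "R \<equiv> zd + (real n - 1) * zo"
  defines "e \<equiv> \<nu> * (1 - R) - \<rho> * \<sigma> * sqrt n * zs"
  shows "first_variation n \<sigma> \<gamma>P c \<gamma> \<nu> \<rho> (sym_mat n zd zo) (const_vec n zs) dQ dS =
     - (1 / n) * (((zd - 1) / c + \<gamma> * \<nu>\<^sup>2 * (zd - zo)) * (\<Sum>i<n. dQ i i)
       + (\<gamma> * \<nu>\<^sup>2 * zo + \<gamma> * \<rho> * \<nu> * \<sigma> / sqrt n * zs - \<gamma>P * \<nu> * e / n) * (\<Sum>i<n. \<Sum>j<n. dQ i j)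
       + (\<gamma> * \<sigma>\<^sup>2 * zs + \<gamma> * \<rho> * \<nu> * \<sigma> / sqrt n * R
          - \<gamma>P * (\<rho> * \<sigma> / sqrt n * e - (1 - \<rho>\<^sup>2) * \<sigma>\<^sup>2 * zs)) * (\<Sum>i<n. dS i))"
proof -
  have rows: "(\<Sum>i<n. row_lin n \<sigma> c \<gamma> \<nu> \<rho> (sym_mat n zd zo) (const_vec n zs) dQ dS i) =
      ((zd - 1) / c + \<gamma> * \<nu>\<^sup>2 * (zd - zo)) * (\<Sum>i<n. dQ i i)
      + (\<gamma> * \<nu>\<^sup>2 * zo + \<gamma> * \<rho> * \<nu> * \<sigma> / sqrt n * zs) * (\<Sum>i<n. \<Sum>j<n. dQ i j)
      + (\<gamma> * \<sigma>\<^sup>2 * zs + \<gamma> * \<rho> * \<nu> * \<sigma> / sqrt n * R) * (\<Sum>i<n. dS i)"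
    unfolding R_def by (simp add: row_lin_sym sum.distrib sum_distrib_left)
  have "(\<Sum>i<n. col_lin n \<sigma> \<nu> \<rho> (sym_mat n zd zo) (const_vec n zs) dQ dS i) =
      (\<Sum>i<n. - 2 * e * \<nu> * (\<Sum>j<n. dQ j i)
        - 2 * (\<rho> * \<sigma> / sqrt n * e - (1 - \<rho>\<^sup>2) * \<sigma>\<^sup>2 * zs) * (\<Sum>j<n. dS j))"
    unfolding e_def R_def by (rule sum.cong) (simp_all add: col_lin_sym assms(1))
  also have "\<dots> = - 2 * e * \<nu> * (\<Sum>i<n. \<Sum>j<n. dQ j i)
      - 2 * real n * (\<rho> * \<sigma> / sqrt n * e - (1 - \<rho>\<^sup>2) * \<sigma>\<^sup>2 * zs) * (\<Sum>i<n. dS i)"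
    by (simp only: sum_subtractf sum_distrib_left[symmetric] sum_constant card_lessThan) (simp add: mult_ac)
  also have "(\<Sum>i<n. \<Sum>j<n. dQ j i) = (\<Sum>i<n. \<Sum>j<n. dQ i j)"
    by (rule sum.swap)
  finally have cols: "(\<Sum>i<n. col_lin n \<sigma> \<nu> \<rho> (sym_mat n zd zo) (const_vec n zs) dQ dS i) =
      - 2 * e * \<nu> * (\<Sum>i<n. \<Sum>j<n. dQ i j)
      - 2 * real n * (\<rho> * \<sigma> / sqrt n * e - (1 - \<rho>\<^sup>2) * \<sigma>\<^sup>2 * zs) * (\<Sum>i<n. dS i)" .
  have "\<gamma>P / (2 * (real n)\<^sup>2) * (\<Sum>i<n. col_lin n \<sigma> \<nu> \<rho> (sym_mat n zd zo) (const_vec n zs) dQ dS i) =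
      - (1 / n) * (\<gamma>P * \<nu> * e / n * (\<Sum>i<n. \<Sum>j<n. dQ i j)
        + \<gamma>P * (\<rho> * \<sigma> / sqrt n * e - (1 - \<rho>\<^sup>2) * \<sigma>\<^sup>2 * zs) * (\<Sum>i<n. dS i))"
    unfolding cols using assms(1) by (simp add: field_simps power2_eq_square)
  then show ?thesis
    unfolding first_variation_def rows by (simp add: algebra_simps)
qed

locale homogeneous =
  fixes n :: nat and \<sigma> c \<gamma> \<nu> \<rho> :: real
  assumes n_pos: "0 < n" and \<sigma>_pos: "0 < \<sigma>" and c_pos: "0 < c" and \<gamma>_pos: "0 < \<gamma>"
    and \<nu>_pos: "0 < \<nu>" and \<rho>_gt: "-1 < \<rho>" and \<rho>_lt: "\<rho> < 1"
begin

lemma one_minus_\<rho>2_pos: "0 < 1 - \<rho>\<^sup>2"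
  using \<rho>_gt \<rho>_lt by (simp add: abs_square_less_1)

lemma row_quad_nonneg: "0 \<le> row_quad n \<sigma> c \<gamma> \<nu> \<rho> dQ dS i"
  unfolding row_quad_def using c_pos \<gamma>_pos one_minus_\<rho>2_pos
  by (intro add_nonneg_nonneg mult_nonneg_nonneg sum_nonneg) auto

lemma col_quad_nonneg: "0 \<le> col_quad n \<sigma> \<nu> \<rho> dQ dS i"
  unfolding col_quad_def using one_minus_\<rho>2_pos
  by (intro add_nonneg_nonneg mult_nonneg_nonneg) auto

lemma second_variation_nonneg: "0 \<le> \<gamma>P \<Longrightarrow> 0 \<le> second_variation n \<sigma> \<gamma>P c \<gamma> \<nu> \<rho> dQ dS"
  unfolding second_variation_def
  by (intro add_nonneg_nonneg mult_nonneg_nonneg sum_nonneg row_quad_nonneg col_quad_nonneg) auto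

lemma row_quad_eq_0D:
  assumes "row_quad n \<sigma> c \<gamma> \<nu> \<rho> dQ dS i = 0" and "j < n"
  shows "dS i = 0" and "dQ i j = 0"
proof -
  let ?sq = "\<lambda>j. (\<nu> * dQ i j + \<rho> * \<sigma> / sqrt n * dS i)\<^sup>2"
  have "(dQ i i)\<^sup>2 / (2 * c) + \<gamma> / 2 * ((\<Sum>j<n. ?sq j) + (1 - \<rho>\<^sup>2) * \<sigma>\<^sup>2 * (dS i)\<^sup>2) = 0"
    using assms(1) unfolding row_quad_def .
  moreover have "0 \<le> (dQ i i)\<^sup>2 / (2 * c)" "0 \<le> (\<Sum>j<n. ?sq j)" "0 \<le> (1 - \<rho>\<^sup>2) * \<sigma>\<^sup>2 * (dS i)\<^sup>2"
    using c_pos one_minus_\<rho>2_pos by (auto intro: sum_nonneg)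
  ultimately have "(\<Sum>j<n. ?sq j) = 0" and "(1 - \<rho>\<^sup>2) * \<sigma>\<^sup>2 * (dS i)\<^sup>2 = 0"
    using \<gamma>_pos by (smt (verit) mult_pos_pos half_gt_zero_iff)+
  then show "dS i = 0" and "dQ i j = 0"
    using one_minus_\<rho>2_pos \<sigma>_pos \<nu>_pos assms(2) by (auto simp: sum_nonneg_eq_0_iff)
qed

lemma second_variation_eq_0D:
  assumes "0 \<le> \<gamma>P" and "second_variation n \<sigma> \<gamma>P c \<gamma> \<nu> \<rho> dQ dS = 0" and "i < n" "j < n"
  shows "dS i = 0" and "dQ i j = 0"
proof -
  have "0 \<le> \<gamma>P / (2 * (real n)\<^sup>2) * (\<Sum>i<n. col_quad n \<sigma> \<nu> \<rho> dQ dS i)"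
    using assms(1) by (intro mult_nonneg_nonneg sum_nonneg col_quad_nonneg) auto
  then have "(\<Sum>i<n. row_quad n \<sigma> c \<gamma> \<nu> \<rho> dQ dS i) \<le> 0"
    using assms(2) n_pos unfolding second_variation_def by (smt (verit) divide_pos_pos mult_pos_pos of_nat_0_less_iff)
  then have "row_quad n \<sigma> c \<gamma> \<nu> \<rho> dQ dS i = 0"
    using assms(3) by (metis (no_types) antisym lessThan_iff row_quad_nonneg sum_nonneg sum_nonneg_eq_0_iff finite_lessThan)
  then show "dS i = 0" and "dQ i j = 0"
    using row_quad_eq_0D assms(4) by blast+
qed

definition A :: real where "A = \<gamma> + 1 / (c * \<nu>\<^sup>2)"

definition \<kappa> :: real where "\<kappa> = \<rho>\<^sup>2 * (A - \<gamma>) / (1 - \<rho>\<^sup>2)"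

definition D :: "real \<Rightarrow> real" where "D \<gamma>P = n * \<gamma> * A + \<gamma> * \<kappa> + ((real n - 1) * A + \<gamma>) * \<gamma>P"

definition w :: "real \<Rightarrow> real" where "w \<gamma>P = A * (n * \<gamma> + (real n - 1) * \<gamma>P) / D \<gamma>P"

definition zo :: "real \<Rightarrow> real" where "zo \<gamma>P = 1 - w \<gamma>P"

definition zd :: "real \<Rightarrow> real" where "zd \<gamma>P = 1 - \<gamma> * w \<gamma>P / A"

definition zs :: "real \<Rightarrow> real" where
  "zs \<gamma>P = - \<rho> * \<gamma> * \<nu> * (A - \<gamma>) * w \<gamma>P / (A * (1 - \<rho>\<^sup>2) * \<sigma> * sqrt n * (\<gamma> + \<gamma>P))"

lemma A_minus_\<gamma>: "A - \<gamma> = 1 / (c * \<nu>\<^sup>2)"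
  unfolding A_def by simp

lemma A_gt_\<gamma>: "\<gamma> < A"
  using A_minus_\<gamma> c_pos \<nu>_pos by (metis diff_gt_0_iff_gt divide_pos_pos mult_pos_pos zero_less_one zero_less_power)

lemma A_pos: "0 < A"
  using A_gt_\<gamma> \<gamma>_pos by simp

lemma \<kappa>_nonneg: "0 \<le> \<kappa>"
  unfolding \<kappa>_def using A_gt_\<gamma> one_minus_\<rho>2_pos by simp

lemma D_pos: "0 \<le> \<gamma>P \<Longrightarrow> 0 < D \<gamma>P"
  unfolding D_def using n_pos \<gamma>_pos A_pos \<kappa>_nonneg
  by (intro add_pos_nonneg mult_nonneg_nonneg) auto

lemma w_pos: "0 \<le> \<gamma>P \<Longrightarrow> 0 < w \<gamma>P"
  unfolding w_def using D_pos A_pos n_pos \<gamma>_pos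
  by (intro divide_pos_pos mult_pos_pos add_pos_nonneg mult_nonneg_nonneg) auto

lemma w_lt_1: "0 < \<gamma>P \<Longrightarrow> w \<gamma>P < 1"
proof -
  assume pos: "0 < \<gamma>P"
  have "A * (n * \<gamma> + (real n - 1) * \<gamma>P) < D \<gamma>P"
    unfolding D_def using pos \<gamma>_pos \<kappa>_nonneg by (simp add: algebra_simps add_pos_nonneg)
  then show ?thesis unfolding w_def using D_pos pos by simp
qed

lemma diag_foc: "(zd \<gamma>P - 1) / c + \<gamma> * \<nu>\<^sup>2 * (zd \<gamma>P - zo \<gamma>P) = 0"
proof -
  have "(zd \<gamma>P - 1) / c + \<gamma> * \<nu>\<^sup>2 * (zd \<gamma>P - zo \<gamma>P) = \<gamma> * w \<gamma>P / A * (\<nu>\<^sup>2 * (A - \<gamma>) - 1 / c)"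
    unfolding zd_def zo_def using A_pos by (simp add: field_simps)
  then show ?thesis unfolding A_minus_\<gamma> using c_pos \<nu>_pos by simp
qed

lemma offdiag_and_S_foc:
  assumes pos: "0 < \<gamma>P"
  defines "u \<equiv> \<sigma> * sqrt n * zs \<gamma>P" and "R \<equiv> zd \<gamma>P + (real n - 1) * zo \<gamma>P"
  shows "n * \<gamma> * \<nu> * zo \<gamma>P + \<gamma> * \<rho> * u = \<gamma>P * (\<nu> * (1 - R) - \<rho> * u)" (is ?offdiag)
    and "\<gamma> * (u + \<rho> * \<nu> * R) = \<gamma>P * (\<rho> * (\<nu> * (1 - R) - \<rho> * u) - (1 - \<rho>\<^sup>2) * u)" (is ?S)
proof -
  have "A * (1 - \<rho>\<^sup>2) * \<sigma> * sqrt n * (\<gamma> + \<gamma>P) \<noteq> 0"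
    using A_pos one_minus_\<rho>2_pos \<sigma>_pos n_pos pos \<gamma>_pos by simp
  then have u_mul: "(1 - \<rho>\<^sup>2) * ((\<gamma> + \<gamma>P) * u * A) = - \<rho> * \<gamma> * \<nu> * (A - \<gamma>) * w \<gamma>P"
    unfolding u_def zs_def by (simp add: field_simps)
  have "(1 - \<rho>\<^sup>2) * ((\<gamma> + \<gamma>P) * \<rho> * u * A) = \<rho> * ((1 - \<rho>\<^sup>2) * ((\<gamma> + \<gamma>P) * u * A))"
    by (simp add: mult_ac)
  also have "\<dots> = (1 - \<rho>\<^sup>2) * (- \<gamma> * \<nu> * \<kappa> * w \<gamma>P)"
    unfolding u_mul \<kappa>_def using one_minus_\<rho>2_pos by (simp add: power2_eq_square)
  finally have "(\<gamma> + \<gamma>P) * \<rho> * u * A = - \<gamma> * \<nu> * \<kappa> * w \<gamma>P"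
    using one_minus_\<rho>2_pos by (simp only: mult_left_cancel less_irrefl)
  then have u: "(\<gamma> + \<gamma>P) * \<rho> * u = - \<gamma> * \<nu> * \<kappa> * w \<gamma>P / A"
    using A_pos by (simp add: field_simps)
  have R: "R = n - w \<gamma>P * ((real n - 1) * A + \<gamma>) / A"
    unfolding R_def zd_def zo_def using A_pos by (simp add: field_simps)
  have wD: "w \<gamma>P * D \<gamma>P = A * (n * \<gamma> + (real n - 1) * \<gamma>P)"
    unfolding w_def using D_pos[of \<gamma>P] pos by simp
  have "\<gamma>P * (\<nu> * (1 - R) - \<rho> * u) - (n * \<gamma> * \<nu> * zo \<gamma>P + \<gamma> * \<rho> * u)
      = \<nu> / A * (w \<gamma>P * D \<gamma>P - A * (n * \<gamma> + (real n - 1) * \<gamma>P))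
        - ((\<gamma> + \<gamma>P) * \<rho> * u + \<gamma> * \<nu> * \<kappa> * w \<gamma>P / A)"
    using A_pos unfolding zo_def D_def R by (simp add: field_simps)
  then show ?offdiag using wD u by simp
  txt \<open>The second equation is \<open>\<rho>\<close> times the first plus \<open>u_mul\<close>, since \<open>zd - zo = (A - \<gamma>) w / A\<close>.\<close>
  have "\<gamma> * (u + \<rho> * \<nu> * R) - \<gamma>P * (\<rho> * (\<nu> * (1 - R) - \<rho> * u) - (1 - \<rho>\<^sup>2) * u)
      = ((1 - \<rho>\<^sup>2) * ((\<gamma> + \<gamma>P) * u * A) + \<rho> * \<gamma> * \<nu> * (A - \<gamma>) * w \<gamma>P) / A
        - \<rho> * (\<gamma>P * (\<nu> * (1 - R) - \<rho> * u) - (n * \<gamma> * \<nu> * zo \<gamma>P + \<gamma> * \<rho> * u))"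
    using A_pos unfolding R_def zd_def zo_def by (simp add: field_simps power2_eq_square)
  then show ?S using u_mul \<open>?offdiag\<close> by simp
qed

lemma first_variation_candidate:
  assumes "0 < \<gamma>P"
  shows "first_variation n \<sigma> \<gamma>P c \<gamma> \<nu> \<rho> (sym_mat n (zd \<gamma>P) (zo \<gamma>P)) (const_vec n (zs \<gamma>P)) dQ dS = 0"
proof -
  define s where "s = sqrt n"
  define u where "u = \<sigma> * s * zs \<gamma>P"
  define R where "R = zd \<gamma>P + (real n - 1) * zo \<gamma>P"
  define e where "e = \<nu> * (1 - R) - \<rho> * \<sigma> * s * zs \<gamma>P"
  have s: "0 < s" "real n = s\<^sup>2"
    unfolding s_def using n_pos by simp_all
  have "\<gamma> * \<nu>\<^sup>2 * zo \<gamma>P + \<gamma> * \<rho> * \<nu> * \<sigma> / s * zs \<gamma>P - \<gamma>P * \<nu> * e / n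
      = \<nu> / n * (n * \<gamma> * \<nu> * zo \<gamma>P + \<gamma> * \<rho> * u - \<gamma>P * (\<nu> * (1 - R) - \<rho> * u))"
    unfolding u_def e_def s(2) using s(1) by (simp add: field_simps power2_eq_square)
  also have "\<dots> = 0"
    using offdiag_and_S_foc(1)[OF assms] unfolding u_def R_def s_def by simp
  finally have offdiag: "\<gamma> * \<nu>\<^sup>2 * zo \<gamma>P + \<gamma> * \<rho> * \<nu> * \<sigma> / s * zs \<gamma>P - \<gamma>P * \<nu> * e / n = 0" .
  have "\<gamma> * \<sigma>\<^sup>2 * zs \<gamma>P + \<gamma> * \<rho> * \<nu> * \<sigma> / s * R - \<gamma>P * (\<rho> * \<sigma> / s * e - (1 - \<rho>\<^sup>2) * \<sigma>\<^sup>2 * zs \<gamma>P)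
      = \<sigma> / s * (\<gamma> * (u + \<rho> * \<nu> * R) - \<gamma>P * (\<rho> * (\<nu> * (1 - R) - \<rho> * u) - (1 - \<rho>\<^sup>2) * u))"
    unfolding u_def e_def using s(1) by (simp add: field_simps power2_eq_square)
  also have "\<dots> = 0"
    using offdiag_and_S_foc(2)[OF assms] unfolding u_def R_def s_def by simp
  finally have S: "\<gamma> * \<sigma>\<^sup>2 * zs \<gamma>P + \<gamma> * \<rho> * \<nu> * \<sigma> / s * R
      - \<gamma>P * (\<rho> * \<sigma> / s * e - (1 - \<rho>\<^sup>2) * \<sigma>\<^sup>2 * zs \<gamma>P) = 0" .
  show ?thesis
    unfolding first_variation_sym[OF n_pos] diag_foc s_def[symmetric] R_def[symmetric] e_def[symmetric]
      offdiag S
    by simp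
qed

lemma maximiser_eq_candidate:
  assumes pos: "0 < \<gamma>P"
  shows "maximiser n \<sigma> \<gamma>P (\<lambda>_. c) (\<lambda>_. \<gamma>) (\<lambda>_. \<nu>) (\<lambda>_. \<rho>) = (sym_mat n (zd \<gamma>P) (zo \<gamma>P), const_vec n (zs \<gamma>P))"
proof (rule maximiser_eqI)
  let ?F = "objf n \<sigma> \<gamma>P (\<lambda>_. c) (\<lambda>_. \<gamma>) (\<lambda>_. \<nu>) (\<lambda>_. \<rho>)"
  let ?Q = "sym_mat n (zd \<gamma>P) (zo \<gamma>P)" and ?S = "const_vec n (zs \<gamma>P)"
  let ?gap = "\<lambda>Q' S'. second_variation n \<sigma> \<gamma>P c \<gamma> \<nu> \<rho> (\<lambda>i j. Q' i j - ?Q i j) (\<lambda>i. S' i - ?S i)"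
  have gap: "?F Q' S' = ?F ?Q ?S - ?gap Q' S'" for Q' S'
  proof -
    have "(\<lambda>i j. ?Q i j + (Q' i j - ?Q i j)) = Q'" "(\<lambda>i. ?S i + (S' i - ?S i)) = S'"
      by simp_all
    then show ?thesis
      using objf_add[OF n_pos, of \<sigma> \<gamma>P c \<gamma> \<nu> \<rho> ?Q "\<lambda>i j. Q' i j - ?Q i j" ?S "\<lambda>i. S' i - ?S i"]
      unfolding first_variation_candidate[OF pos] by (simp only: add_0_right)
  qed
  show "admissible n ?Q ?S"
    by (rule admissible_sym)
  show "?F Q' S' \<le> ?F ?Q ?S" for Q' S'
  proof -
    have "0 \<le> ?gap Q' S'"
      using second_variation_nonneg pos by simp
    then show ?thesis
      using gap[of Q' S'] by simp
  qed
  show "Q' = ?Q \<and> S' = ?S" if "admissible n Q' S'" and "?F Q' S' = ?F ?Q ?S" for Q' S'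
  proof -
    have "?gap Q' S' = 0"
      using gap[of Q' S'] that(2) by simp
    then have "Q' i j - ?Q i j = 0" "S' i - ?S i = 0" if "i < n" "j < n" for i j
      using second_variation_eq_0D[OF less_imp_le[OF pos]] that by blast+
    then show ?thesis
      using admissible_eqI[OF admissible_sym that(1)] n_pos by auto
  qed
qed

lemma zs_star_eq: "0 < \<gamma>P \<Longrightarrow> zs_star n \<sigma> c \<gamma> \<nu> \<rho> \<gamma>P = zs \<gamma>P"
  unfolding zs_star_def by (simp add: maximiser_eq_candidate const_vec_def n_pos)

lemma zd_star_eq: "0 < \<gamma>P \<Longrightarrow> zd_star n \<sigma> c \<gamma> \<nu> \<rho> \<gamma>P = zd \<gamma>P"
  unfolding zd_star_def by (simp add: maximiser_eq_candidate sym_mat_def n_pos)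

lemma zo_star_eq: "2 \<le> n \<Longrightarrow> 0 < \<gamma>P \<Longrightarrow> zo_star n \<sigma> c \<gamma> \<nu> \<rho> \<gamma>P = zo \<gamma>P"
  unfolding zo_star_def by (simp add: maximiser_eq_candidate sym_mat_def)

lemma zs_factor:
  obtains k where "0 < k" and "\<And>\<gamma>P. zs \<gamma>P = - \<rho> * k * (w \<gamma>P / (\<gamma> + \<gamma>P))"
proof
  let ?k = "\<gamma> * \<nu> * (A - \<gamma>) / (A * (1 - \<rho>\<^sup>2) * \<sigma> * sqrt n)"
  show "0 < ?k"
    using \<gamma>_pos \<nu>_pos A_gt_\<gamma> A_pos one_minus_\<rho>2_pos \<sigma>_pos n_pos by simp
  show "zs \<gamma>P = - \<rho> * ?k * (w \<gamma>P / (\<gamma> + \<gamma>P))" for \<gamma>P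
    unfolding zs_def by (simp add: field_simps)
qed

lemma w_div_strict_antimono:
  assumes a: "0 < a" and ab: "a < b"
  shows "w b / (\<gamma> + b) < w a / (\<gamma> + a)"
proof -
  have split: "w \<gamma>P / (\<gamma> + \<gamma>P) = A * ((real n - 1) + \<gamma> / (\<gamma> + \<gamma>P)) / D \<gamma>P" if "0 < \<gamma>P" for \<gamma>P
    unfolding w_def using that \<gamma>_pos D_pos[of \<gamma>P] by (simp add: field_simps)
  have "\<gamma> / (\<gamma> + b) < \<gamma> / (\<gamma> + a)"
    using \<gamma>_pos a ab by (simp add: divide_strict_left_mono)
  moreover have "D a \<le> D b"
    unfolding D_def using ab n_pos A_pos \<gamma>_pos
    by (intro add_left_mono mult_left_mono) (auto simp: add_nonneg_nonneg)
  moreover have "0 < (real n - 1) + \<gamma> / (\<gamma> + b)"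
    using n_pos \<gamma>_pos a ab by (simp add: add_nonneg_pos)
  ultimately have "((real n - 1) + \<gamma> / (\<gamma> + b)) / D b < ((real n - 1) + \<gamma> / (\<gamma> + a)) / D a"
    using D_pos[of a] a by (intro frac_less) auto
  from mult_strict_left_mono[OF this A_pos] show ?thesis
    using split[OF a] split[of b] a ab by (simp add: times_divide_eq_right[symmetric] del: times_divide_eq_right)
qed

lemma sgn_zs_star:
  assumes pos: "0 < \<gamma>P"
  shows "sgn (zs_star n \<sigma> c \<gamma> \<nu> \<rho> \<gamma>P) = - sgn \<rho>"
proof -
  obtain k where k: "0 < k" "zs \<gamma>P = - \<rho> * k * (w \<gamma>P / (\<gamma> + \<gamma>P))"
    using zs_factor by metis
  then show ?thesis
    using w_pos[of \<gamma>P] pos \<gamma>_pos by (simp add: zs_star_eq[OF pos] sgn_mult)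
qed

lemma abs_zs_star:
  obtains k where "0 < k" and "\<And>\<gamma>P. 0 < \<gamma>P \<Longrightarrow> \<bar>zs_star n \<sigma> c \<gamma> \<nu> \<rho> \<gamma>P\<bar> = \<bar>\<rho>\<bar> * k * (w \<gamma>P / (\<gamma> + \<gamma>P))"
proof -
  obtain k where k: "0 < k" "\<And>\<gamma>P. zs \<gamma>P = - \<rho> * k * (w \<gamma>P / (\<gamma> + \<gamma>P))"
    using zs_factor by blast
  show thesis
  proof (rule that[OF k(1)])
    fix \<gamma>P :: real
    assume "0 < \<gamma>P"
    then show "\<bar>zs_star n \<sigma> c \<gamma> \<nu> \<rho> \<gamma>P\<bar> = \<bar>\<rho>\<bar> * k * (w \<gamma>P / (\<gamma> + \<gamma>P))"
      using k(1) w_pos[of \<gamma>P] \<gamma>_pos by (simp add: zs_star_eq k(2) abs_mult)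
  qed
qed

lemma abs_zs_star_strict_antimono:
  assumes "\<rho> \<noteq> 0" "0 < a" "a < b"
  shows "\<bar>zs_star n \<sigma> c \<gamma> \<nu> \<rho> b\<bar> < \<bar>zs_star n \<sigma> c \<gamma> \<nu> \<rho> a\<bar>"
proof -
  obtain k where k: "0 < k" "\<And>\<gamma>P. 0 < \<gamma>P \<Longrightarrow> \<bar>zs_star n \<sigma> c \<gamma> \<nu> \<rho> \<gamma>P\<bar> = \<bar>\<rho>\<bar> * k * (w \<gamma>P / (\<gamma> + \<gamma>P))"
    using abs_zs_star by blast
  have "0 < \<bar>\<rho>\<bar> * k"
    using assms(1) k(1) by simp
  from mult_strict_left_mono[OF w_div_strict_antimono[OF assms(2,3)] this] show ?thesis
    using k(2) assms(2,3) by simp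
qed

lemma abs_zs_star_antimono:
  assumes "0 < a" "a \<le> b"
  shows "\<bar>zs_star n \<sigma> c \<gamma> \<nu> \<rho> b\<bar> \<le> \<bar>zs_star n \<sigma> c \<gamma> \<nu> \<rho> a\<bar>"
proof (cases "\<rho> = 0 \<or> a = b")
  case True
  moreover obtain k where "\<And>\<gamma>P. 0 < \<gamma>P \<Longrightarrow> \<bar>zs_star n \<sigma> c \<gamma> \<nu> \<rho> \<gamma>P\<bar> = \<bar>\<rho>\<bar> * k * (w \<gamma>P / (\<gamma> + \<gamma>P))"
    using abs_zs_star by blast
  ultimately show ?thesis
    using assms by auto
next
  case False
  then show ?thesis
    using abs_zs_star_strict_antimono assms by (simp add: less_imp_le)
qed

lemma zo_star_pos: "2 \<le> n \<Longrightarrow> 0 < \<gamma>P \<Longrightarrow> 0 < zo_star n \<sigma> c \<gamma> \<nu> \<rho> \<gamma>P"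
  using w_lt_1 by (simp add: zo_star_eq zo_def)

lemma zd_star_pos: "0 < \<gamma>P \<Longrightarrow> 0 < zd_star n \<sigma> c \<gamma> \<nu> \<rho> \<gamma>P"
proof -
  assume pos: "0 < \<gamma>P"
  have "\<gamma> * w \<gamma>P < A"
    using mult_strict_left_mono[OF w_lt_1[OF pos] \<gamma>_pos] A_gt_\<gamma> by simp
  then show ?thesis
    using pos A_pos by (simp add: zd_star_eq zd_def)
qed

lemma limit_denom_pos: "0 < (real n - 1) * A + \<gamma>"
  using n_pos A_pos \<gamma>_pos by (simp add: add_nonneg_pos)

lemma w_tendsto: "(w \<longlongrightarrow> (real n - 1) * A / ((real n - 1) * A + \<gamma>)) at_top"
proof -
  have inv: "((\<lambda>t::real. k / t) \<longlongrightarrow> 0) at_top" for k :: real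
    by (intro tendsto_divide_0[OF tendsto_const] filterlim_at_top_imp_at_infinity filterlim_ident)
  have "((\<lambda>\<gamma>P. A * (n * \<gamma> / \<gamma>P + (real n - 1)) / ((n * \<gamma> * A + \<gamma> * \<kappa>) / \<gamma>P + ((real n - 1) * A + \<gamma>)))
      \<longlongrightarrow> A * (0 + (real n - 1)) / (0 + ((real n - 1) * A + \<gamma>))) at_top"
    using limit_denom_pos by (intro tendsto_intros inv) auto
  then have "((\<lambda>\<gamma>P. A * (n * \<gamma> / \<gamma>P + (real n - 1)) / ((n * \<gamma> * A + \<gamma> * \<kappa>) / \<gamma>P + ((real n - 1) * A + \<gamma>)))
      \<longlongrightarrow> (real n - 1) * A / ((real n - 1) * A + \<gamma>)) at_top"
    by (simp add: mult.commute)
  moreover have "eventually (\<lambda>\<gamma>P. A * (n * \<gamma> / \<gamma>P + (real n - 1)) / ((n * \<gamma> * A + \<gamma> * \<kappa>) / \<gamma>P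
      + ((real n - 1) * A + \<gamma>)) = w \<gamma>P) at_top"
    using eventually_gt_at_top[of 0]
  proof eventually_elim
    case (elim \<gamma>P)
    have "n * \<gamma> / \<gamma>P + (real n - 1) = (n * \<gamma> + (real n - 1) * \<gamma>P) / \<gamma>P"
      and "(n * \<gamma> * A + \<gamma> * \<kappa>) / \<gamma>P + ((real n - 1) * A + \<gamma>) = D \<gamma>P / \<gamma>P"
      using elim unfolding D_def by (simp_all add: field_simps)
    then show ?case
      using elim D_pos[of \<gamma>P] unfolding w_def by simp
  qed
  ultimately show ?thesis
    by (rule Lim_transform_eventually)
qed

lemma zs_star_tendsto: "(zs_star n \<sigma> c \<gamma> \<nu> \<rho> \<longlongrightarrow> 0) at_top"
proof -
  obtain k where k: "\<And>\<gamma>P. zs \<gamma>P = - \<rho> * k * (w \<gamma>P / (\<gamma> + \<gamma>P))"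
    using zs_factor by blast
  have "((\<lambda>\<gamma>P. 1 / (\<gamma> + \<gamma>P)) \<longlongrightarrow> 0) at_top"
    by (intro tendsto_divide_0[OF tendsto_const] filterlim_at_top_imp_at_infinity
        filterlim_tendsto_add_at_top[OF tendsto_const filterlim_ident])
  from tendsto_mult[OF tendsto_const[of "- \<rho> * k"] tendsto_mult[OF w_tendsto this]]
  have "(zs \<longlongrightarrow> 0) at_top"
    unfolding k by simp
  moreover have "eventually (\<lambda>\<gamma>P. zs \<gamma>P = zs_star n \<sigma> c \<gamma> \<nu> \<rho> \<gamma>P) at_top"
    using eventually_gt_at_top[of 0] by eventually_elim (simp add: zs_star_eq)
  ultimately show ?thesis
    by (rule Lim_transform_eventually)
qed

lemma zo_star_tendsto:
  assumes "2 \<le> n"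
  shows "(zo_star n \<sigma> c \<gamma> \<nu> \<rho> \<longlongrightarrow> \<gamma> / ((real n - 1) * A + \<gamma>)) at_top"
proof -
  have "1 - (real n - 1) * A / ((real n - 1) * A + \<gamma>) = \<gamma> / ((real n - 1) * A + \<gamma>)"
    using limit_denom_pos by (simp add: field_simps)
  with tendsto_diff[OF tendsto_const[of 1] w_tendsto] have "(zo \<longlongrightarrow> \<gamma> / ((real n - 1) * A + \<gamma>)) at_top"
    unfolding zo_def[abs_def] by simp
  moreover have "eventually (\<lambda>\<gamma>P. zo \<gamma>P = zo_star n \<sigma> c \<gamma> \<nu> \<rho> \<gamma>P) at_top"
    using eventually_gt_at_top[of 0] by eventually_elim (simp add: zo_star_eq assms)
  ultimately show ?thesis
    by (rule Lim_transform_eventually)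
qed

lemma zd_star_tendsto:
  "(zd_star n \<sigma> c \<gamma> \<nu> \<rho> \<longlongrightarrow> ((real n - 1) * A - (real n - 2) * \<gamma>) / ((real n - 1) * A + \<gamma>)) at_top"
proof -
  define den where "den = (real n - 1) * A + \<gamma>"
  have "1 - \<gamma> * ((real n - 1) * A / den) / A = (den - (real n - 1) * \<gamma>) / den"
    using limit_denom_pos A_pos unfolding den_def[symmetric] by (simp add: field_simps)
  also have "den - (real n - 1) * \<gamma> = (real n - 1) * A - (real n - 2) * \<gamma>"
    unfolding den_def by (simp add: algebra_simps)
  finally have "1 - \<gamma> * ((real n - 1) * A / ((real n - 1) * A + \<gamma>)) / A
      = ((real n - 1) * A - (real n - 2) * \<gamma>) / ((real n - 1) * A + \<gamma>)"
    unfolding den_def .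
  with tendsto_diff[OF tendsto_const[of 1] tendsto_divide[OF tendsto_mult[OF tendsto_const[of \<gamma>] w_tendsto]
      tendsto_const[of A]]]
  have "(zd \<longlongrightarrow> ((real n - 1) * A - (real n - 2) * \<gamma>) / ((real n - 1) * A + \<gamma>)) at_top"
    using A_pos unfolding zd_def[abs_def] by simp
  moreover have "eventually (\<lambda>\<gamma>P. zd \<gamma>P = zd_star n \<sigma> c \<gamma> \<nu> \<rho> \<gamma>P) at_top"
    using eventually_gt_at_top[of 0] by eventually_elim (simp add: zd_star_eq)
  ultimately show ?thesis
    by (rule Lim_transform_eventually)
qed

lemma zo_limit_bounds:
  "2 \<le> n \<Longrightarrow> 0 < \<gamma> / ((real n - 1) * A + \<gamma>) \<and> \<gamma> / ((real n - 1) * A + \<gamma>) < 1"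
  using limit_denom_pos \<gamma>_pos A_pos by simp

lemma zd_limit_bounds:
  "0 < ((real n - 1) * A - (real n - 2) * \<gamma>) / ((real n - 1) * A + \<gamma>)
   \<and> ((real n - 1) * A - (real n - 2) * \<gamma>) / ((real n - 1) * A + \<gamma>) \<le> 1"
proof -
  have "(real n - 1) * A - (real n - 2) * \<gamma> = (real n - 1) * (A - \<gamma>) + \<gamma>"
    by (simp add: algebra_simps)
  then have "0 < (real n - 1) * A - (real n - 2) * \<gamma>"
    using n_pos A_gt_\<gamma> \<gamma>_pos by (simp add: add_nonneg_pos)
  then show ?thesis
    using limit_denom_pos n_pos \<gamma>_pos by (simp add: algebra_simps)
qed

end

theorem mainTheorem3:
  fixes n :: nat and \<sigma> c \<gamma> \<nu> \<rho> :: real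
  assumes hn: "n \<ge> 1" and h\<sigma>: "\<sigma> > 0" and hc: "c > 0" and h\<gamma>: "\<gamma> > 0" and h\<nu>: "\<nu> > 0"
    and h\<rho>: "-1 < \<rho>" "\<rho> < 1"
  defines "A \<equiv> \<gamma> + 1 / (c * \<nu>\<^sup>2)"
  shows
    \<comment> \<open>(i)\<close>
    "(\<forall>\<gamma>P>0. sgn (zs_star n \<sigma> c \<gamma> \<nu> \<rho> \<gamma>P) = - sgn \<rho>)
     \<comment> \<open>(ii)\<close>
     \<and> (n \<ge> 2 \<longrightarrow> (\<forall>\<gamma>P>0. zo_star n \<sigma> c \<gamma> \<nu> \<rho> \<gamma>P > 0))
     \<and> (\<forall>\<gamma>P>0. zd_star n \<sigma> c \<gamma> \<nu> \<rho> \<gamma>P > 0)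
     \<comment> \<open>(iii)\<close>
     \<and> (\<forall>a b. 0 < a \<longrightarrow> a \<le> b \<longrightarrow>
          \<bar>zs_star n \<sigma> c \<gamma> \<nu> \<rho> b\<bar> \<le> \<bar>zs_star n \<sigma> c \<gamma> \<nu> \<rho> a\<bar>)
     \<and> (\<rho> \<noteq> 0 \<longrightarrow> (\<forall>a b. 0 < a \<longrightarrow> a < b \<longrightarrow>
          \<bar>zs_star n \<sigma> c \<gamma> \<nu> \<rho> b\<bar> < \<bar>zs_star n \<sigma> c \<gamma> \<nu> \<rho> a\<bar>))
     \<and> ((zs_star n \<sigma> c \<gamma> \<nu> \<rho> \<longlongrightarrow> 0) at_top)
     \<comment> \<open>(iv)\<close>
     \<and> (n \<ge> 2 \<longrightarrow>
          ((zo_star n \<sigma> c \<gamma> \<nu> \<rho> \<longlongrightarrow> \<gamma> / ((real n - 1) * A + \<gamma>)) at_top)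
          \<and> 0 < \<gamma> / ((real n - 1) * A + \<gamma>) \<and> \<gamma> / ((real n - 1) * A + \<gamma>) < 1)
     \<comment> \<open>(v)\<close>
     \<and> ((zd_star n \<sigma> c \<gamma> \<nu> \<rho> \<longlongrightarrow>
            ((real n - 1) * A - (real n - 2) * \<gamma>) / ((real n - 1) * A + \<gamma>)) at_top)
     \<and> 0 < ((real n - 1) * A - (real n - 2) * \<gamma>) / ((real n - 1) * A + \<gamma>)
     \<and> ((real n - 1) * A - (real n - 2) * \<gamma>) / ((real n - 1) * A + \<gamma>) \<le> 1"
proof -
  interpret H: homogeneous n \<sigma> c \<gamma> \<nu> \<rho>
    using assms by unfold_locales auto
  have A: "A = H.A"
    unfolding A_def H.A_def ..
  show ?thesis
    unfolding A
    using H.sgn_zs_star H.zo_star_pos H.zd_star_pos H.abs_zs_star_antimono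
      H.abs_zs_star_strict_antimono H.zs_star_tendsto H.zo_star_tendsto H.zo_limit_bounds
      H.zd_star_tendsto H.zd_limit_bounds
    by blast
qed

end
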